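(* (a) For every integer $n\ge 5$ and every $\epsilon>0$ there exists a convex $n$-gon $K$ such that $\Delta(K_1)/\Delta(K)<\epsilon$. (b) For every integer $n\ge 6$ and every $\epsilon>0$ there exists a convex $n$-gon $K$ such that $\Delta(K_1)/\Delta(K)>1-\epsilon$.
   Context: For a convex polygon $K=A_1A_2\ldots A_n$ ($n\ge 5$, vertices listed counterclockwise, indices taken modulo $n$), $K_1=B_1B_2\ldots B_n$ denotes the convex $n$-gon bounded by the short diagonals $A_1A_3, A_2A_4,\ldots,A_{n-1}A_1,A_nA_2$, where $B_i$ is the intersection point of the diagonals $A_{i-1}A_{i+1}$ and $A_iA_{i+2}$. $\Delta(\cdot)$ denotes area. *)

theory Defs
  imports "HOL-Analysis.Analysis"
begin

text \<open>Points of the plane are pairs of reals. A polygon with n vertices is given by a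
  function A :: nat => real * real, of which only A 0, ..., A (n-1) matter;
  indices are taken modulo n.\<close>

definition cross2 :: "real \<times> real \<Rightarrow> real \<times> real \<Rightarrow> real" where
  "cross2 u v = fst u * snd v - snd u * fst v"

definition vtx :: "nat \<Rightarrow> (nat \<Rightarrow> real \<times> real) \<Rightarrow> int \<Rightarrow> real \<times> real" where
  "vtx n A i = A (nat (i mod int n))"

text \<open>Strictly convex n-gon with vertices listed counterclockwise: every vertex other
  than the endpoints of an edge lies strictly to the left of that (directed) edge.\<close>
definition convex_ngon :: "nat \<Rightarrow> (nat \<Rightarrow> real \<times> real) \<Rightarrow> bool" where
  "convex_ngon n A \<longleftrightarrow> n \<ge> 3 \<and>
     (\<forall>i<n. \<forall>j<n. j \<noteq> i \<and> j \<noteq> (i + 1) mod n \<longrightarrow>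
        cross2 (A ((i + 1) mod n) - A i) (A j - A i) > 0)"

definition polygon_region :: "nat \<Rightarrow> (nat \<Rightarrow> real \<times> real) \<Rightarrow> (real \<times> real) set" where
  "polygon_region n A = convex hull (A ` {..<n})"

definition area :: "(real \<times> real) set \<Rightarrow> real" where
  "area S = measure lebesgue S"

definition Bpt :: "nat \<Rightarrow> (nat \<Rightarrow> real \<times> real) \<Rightarrow> nat \<Rightarrow> real \<times> real" where
  "Bpt n A i = (THE p. p \<in> closed_segment (vtx n A (int i - 1)) (vtx n A (int i + 1)) \<and>
                       p \<in> closed_segment (vtx n A (int i)) (vtx n A (int i + 2)))"

definition inner_region :: "nat \<Rightarrow> (nat \<Rightarrow> real \<times> real) \<Rightarrow> (real \<times> real) set" where
  "inner_region n A = convex hull (Bpt n A ` {..<n})"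

end

theory Submission
  imports Defs
begin

text \<open>
  Put all vertices on the parabola y = -x^2. Every diagonal is then a chord of the parabola,
  and the points B_i are intersections of two chords, with explicit coordinates.

  For (a), put two vertices at x = 1 and x = -1 and the other n - 2 at abscissae in
  [-\<delta>, \<delta>]. Every short diagonal has an endpoint in this cluster, so all B_i lie within
  O(\<delta>) of the apex: K_1 fits into a triangle of area O(\<delta>^2), while K contains a fixed
  triangle.

  For (b), put vertices at x = 1, 1 - \<eta>, -1, \<eta> - 1 and the other n - 4 >= 2 at abscissae
  in [-\<eta>, \<eta>]. Then K lies in a triangle only slightly larger than the triangle T with
  vertices (0, 0), (1, -1), (-1, -1). The points B_1 and B_(n-1) are close to (1, -1) and
  (-1, -1), and the midpoint of the mirror images B_3 and B_(n-3) is close to (0, 0), so K_1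
  contains a triangle almost as large as T. All triangles used are homothetic, so only the
  ratios of their squared scale factors matter.
\<close>

section \<open>Polygons inscribed in a parabola\<close>

definition parab :: "real \<Rightarrow> real \<times> real" where
  "parab x = (x, - x\<^sup>2)"

lemma cross2_parab: "cross2 (parab b - parab a) (parab c - parab a) = (b - a) * (c - a) * (b - c)"
  by (simp add: cross2_def parab_def power2_eq_square algebra_simps)

lemma cross2_parab_pos:
  assumes "a < c \<and> c < b \<or> c < b \<and> b < a \<or> b < a \<and> a < c"
  shows "0 < cross2 (parab b - parab a) (parab c - parab a)"
  unfolding cross2_parab using assms
  by (elim disjE) (simp_all add: mult_pos_pos mult_neg_neg mult_pos_neg mult_neg_pos)

definition ccw_parab :: "nat \<Rightarrow> (nat \<Rightarrow> real) \<Rightarrow> bool" where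
  "ccw_parab n f \<longleftrightarrow> (\<forall>k. 1 \<le> k \<and> k < n \<longrightarrow> f 0 < f k) \<and>
                      (\<forall>j k. 1 \<le> j \<and> j < k \<and> k < n \<longrightarrow> f k < f j)"

lemma convex_ngon_parab:
  assumes f: "ccw_parab n f" and n: "3 \<le> n"
  shows "convex_ngon n (parab \<circ> f)"
  unfolding convex_ngon_def
proof (intro conjI allI impI n)
  fix i j assume ij: "i < n" "j < n" "j \<noteq> i \<and> j \<noteq> (i + 1) mod n"
  have f0_least: "f 0 < f k" if "1 \<le> k" "k < n" for k
    using f that unfolding ccw_parab_def by auto
  have f_decreasing: "f k < f l" if "1 \<le> l" "l < k" "k < n" for k l
    using f that unfolding ccw_parab_def by auto
  consider "i = 0" | "1 \<le> i" "i + 1 < n" | "i = n - 1" using ij n by linarith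
  then have "f i < f j \<and> f j < f ((i + 1) mod n) \<or> f j < f ((i + 1) mod n) \<and> f ((i + 1) mod n) < f i
      \<or> f ((i + 1) mod n) < f i \<and> f i < f j"
  proof cases
    case 1 then show ?thesis using ij f0_least f_decreasing by auto
  next
    case 2
    then have "j = 0 \<or> 1 \<le> j \<and> j < i \<or> i + 1 < j" using ij by auto
    then show ?thesis using 2 ij f0_least f_decreasing by auto
  next
    case 3 then show ?thesis using ij f0_least f_decreasing n by auto
  qed
  then show "0 < cross2 ((parab \<circ> f) ((i + 1) mod n) - (parab \<circ> f) i)
                      ((parab \<circ> f) j - (parab \<circ> f) i)"
    by (simp add: cross2_parab_pos)
qed

lemma closed_segment_parab:
  "closed_segment (parab a) (parab c) = (\<lambda>x. (x, a * c - (a + c) * x)) ` closed_segment a c"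
proof -
  let ?L = "\<lambda>x::real. (x, - (a + c) * x)"
  have L: "linear ?L" by (intro linearI) (auto simp: algebra_simps)
  have "parab a = (0, a * c) + ?L a" "parab c = (0, a * c) + ?L c"
    by (auto simp: parab_def power2_eq_square algebra_simps)
  then have "closed_segment (parab a) (parab c) = (\<lambda>p. (0, a * c) + p) ` ?L ` closed_segment a c"
    by (simp only: closed_segment_translation closed_segment_linear_image[OF L])
  then show ?thesis by (simp add: image_image algebra_simps)
qed

lemma mem_closed_segment_parab:
  "p \<in> closed_segment (parab a) (parab c) \<longleftrightarrow>
     fst p \<in> closed_segment a c \<and> snd p = a * c - (a + c) * fst p"
  unfolding closed_segment_parab by (cases p) auto

lemma mem_closed_segment_real_mult_iff:
  fixes x a c :: real
  shows "x \<in> closed_segment a c \<longleftrightarrow> (x - a) * (x - c) \<le> 0"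
  by (auto simp: closed_segment_eq_real_ivl mult_le_0_iff)

lemma mem_closed_segment_real_min_max_iff:
  fixes x a c :: real
  shows "x \<in> closed_segment a c \<longleftrightarrow> min a c \<le> x \<and> x \<le> max a c"
  by (auto simp: closed_segment_eq_real_ivl)

text \<open>Exactly one of b and d lies strictly between a and c.\<close>
definition interleaved :: "real \<Rightarrow> real \<Rightarrow> real \<Rightarrow> real \<Rightarrow> bool" where
  "interleaved a b c d \<longleftrightarrow> (b - a) * (b - c) * (d - a) * (d - c) < 0"

lemma interleavedI:
  assumes "a > b \<and> b > c \<and> c > d \<or> b > c \<and> c > d \<and> d > a \<or> c > d \<and> d > a \<and> a > b
    \<or> d > a \<and> a > b \<and> b > c"
  shows "interleaved a b c d"
  using assms unfolding interleaved_def
  by (elim disjE) (simp_all add: mult_pos_pos mult_neg_neg mult_pos_neg mult_neg_pos)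

lemma interleaved_denominator_nonzero:
  assumes "interleaved a b c d"
  shows "b + d - a - c \<noteq> 0"
proof
  assume "b + d - a - c = 0"
  then have "(b - a) * (b - c) * (d - a) * (d - c) = ((b - a) * (b - c))\<^sup>2"
    by (simp add: power2_eq_square algebra_simps) algebra
  with assms show False unfolding interleaved_def by simp
qed

text \<open>The chord from parab a to parab c lies on the line y = a c - (a + c) x.\<close>
definition chord_meet :: "real \<Rightarrow> real \<Rightarrow> real \<Rightarrow> real \<Rightarrow> real \<times> real" where
  "chord_meet a b c d = (let x = (b * d - a * c) / (b + d - a - c) in (x, a * c - (a + c) * x))"

lemma chord_meet_mem:
  assumes abcd: "interleaved a b c d"
  shows "chord_meet a b c d \<in> closed_segment (parab a) (parab c)"
    and "chord_meet a b c d \<in> closed_segment (parab b) (parab d)"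
proof -
  define D where "D = b + d - a - c"
  define x where "x = (b * d - a * c) / D"
  have "D \<noteq> 0" using interleaved_denominator_nonzero[OF abcd] by (simp add: D_def)
  then have xD: "x * D = b * d - a * c" by (simp add: x_def)
  have "(x - a) * (x - c) * D\<^sup>2 = (b - a) * (b - c) * (d - a) * (d - c)"
    "(x - b) * (x - d) * D\<^sup>2 = (b - a) * (b - c) * (d - a) * (d - c)"
    "a * c - (a + c) * x = b * d - (b + d) * x"
    using xD unfolding D_def power2_eq_square by algebra+
  moreover have "q \<le> 0" if "q * D\<^sup>2 < 0" for q
    using that zero_le_power2[of D] by (smt (verit) mult_nonneg_nonneg)
  ultimately have "(x - a) * (x - c) \<le> 0" "(x - b) * (x - d) \<le> 0"
    "a * c - (a + c) * x = b * d - (b + d) * x"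
    using abcd unfolding interleaved_def by auto
  then show "chord_meet a b c d \<in> closed_segment (parab a) (parab c)"
    and "chord_meet a b c d \<in> closed_segment (parab b) (parab d)"
    by (simp_all add: mem_closed_segment_parab mem_closed_segment_real_mult_iff chord_meet_def
        Let_def x_def D_def)
qed

lemma chord_meet_unique:
  assumes "interleaved a b c d"
    and "p \<in> closed_segment (parab a) (parab c)" "p \<in> closed_segment (parab b) (parab d)"
  shows "p = chord_meet a b c d"
proof -
  have "snd p = a * c - (a + c) * fst p" "snd p = b * d - (b + d) * fst p"
    using assms(2,3) by (simp_all add: mem_closed_segment_parab)
  then have "fst p * (b + d - a - c) = b * d - a * c" by algebra
  then have "fst p = (b * d - a * c) / (b + d - a - c)"
    using interleaved_denominator_nonzero[OF assms(1)] by (simp add: eq_divide_eq)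
  with \<open>snd p = a * c - (a + c) * fst p\<close> show ?thesis
    by (simp add: chord_meet_def Let_def prod_eq_iff)
qed

lemma chord_meet_mirror:
  assumes "interleaved a b c d"
  shows "chord_meet (- d) (- c) (- b) (- a)
       = (- fst (chord_meet a b c d), snd (chord_meet a b c d))"
proof -
  have "(- fst (chord_meet a b c d), snd (chord_meet a b c d))
      \<in> closed_segment (parab (- d)) (parab (- b)) \<inter> closed_segment (parab (- c)) (parab (- a))"
    using chord_meet_mem[OF assms]
    by (auto simp: mem_closed_segment_parab mem_closed_segment_real_mult_iff algebra_simps)
  moreover have "interleaved (- d) (- c) (- b) (- a)"
    using assms unfolding interleaved_def by (simp add: algebra_simps)
  ultimately show ?thesis by (auto intro: chord_meet_unique[symmetric])
qed

lemma snd_chord_bound: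
  assumes p: "p \<in> closed_segment (parab a) (parab c)" and ac: "\<bar>a\<bar> \<le> 1" "\<bar>c\<bar> \<le> 1"
    and "\<bar>fst p\<bar> \<le> r" "\<bar>a * c\<bar> \<le> r"
  shows "\<bar>snd p\<bar> \<le> 3 * r"
proof -
  have "\<bar>snd p\<bar> \<le> \<bar>a + c\<bar> * \<bar>fst p\<bar> + \<bar>a * c\<bar>"
    using p by (simp add: mem_closed_segment_parab abs_mult[symmetric] abs_triangle_ineq4)
  also have "\<dots> \<le> 2 * r + r"
    using assms by (intro add_mono mult_mono) auto
  finally show ?thesis by simp
qed

lemma the_chord_meet:
  assumes "interleaved a b c d"
  shows "(THE p. p \<in> closed_segment (parab a) (parab c) \<and> p \<in> closed_segment (parab b) (parab d))
       = chord_meet a b c d"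
  by (rule the_equality) (use chord_meet_mem[OF assms] chord_meet_unique[OF assms] in blast)+

lemma vtx_of_nat: "vtx n A (int k) = A (k mod n)"
  by (simp add: vtx_def flip: of_nat_mod)

lemma vtx_pred:
  assumes "Suc h mod n = i" "h < n"
  shows "vtx n A (int i - 1) = A h"
proof -
  have "(int i - 1) mod int n = (int (Suc h) - 1) mod int n"
    using assms(1) by (metis of_nat_mod mod_diff_left_eq)
  then show ?thesis using assms(2) by (simp add: vtx_def)
qed

lemma cyclic_window_cases:
  assumes n: "4 \<le> n" and h: "h < n"
    and hijk: "Suc h mod n = i" "Suc i mod n = j" "Suc j mod n = k"
  obtains "h = n - 1" "i = 0" "j = 1" "k = 2"
    | "h = n - 2" "i = n - 1" "j = 0" "k = 1"
    | "h = n - 3" "i = n - 2" "j = n - 1" "k = 0"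
    | "h + 3 < n" "i = h + 1" "j = h + 2" "k = h + 3"
proof -
  consider "h = n - 1" | "h = n - 2" | "h = n - 3" | "h + 3 < n" using h by linarith
  then show ?thesis
  proof cases
    case 1
    then have "i = 0" using n hijk(1) by simp
    then have "j = 1" using n hijk(2) by simp
    then have "k = 2" using n hijk(3) by simp
    with 1 \<open>i = 0\<close> \<open>j = 1\<close> that show ?thesis by blast
  next
    case 2
    then have "i = n - 1" using n hijk(1) by (simp add: Suc_diff_Suc)
    then have "j = 0" using n hijk(2) by simp
    then have "k = 1" using n hijk(3) by simp
    with 2 \<open>i = n - 1\<close> \<open>j = 0\<close> that show ?thesis by blast
  next
    case 3
    then have "i = n - 2" using n hijk(1) by (simp add: Suc_diff_Suc)
    then have "j = n - 1" using n hijk(2) by (simp add: Suc_diff_Suc)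
    then have "k = 0" using n hijk(3) by simp
    with 3 \<open>i = n - 2\<close> \<open>j = n - 1\<close> that show ?thesis by blast
  next
    case 4
    then show ?thesis using hijk that by auto
  qed
qed

lemma cyclic_window_distinct:
  assumes "4 \<le> n" "h < n" "Suc h mod n = i" "Suc i mod n = j" "Suc j mod n = k"
  shows "distinct [h, i, j, k]" "i < n" "j < n" "k < n" "2 \<le> h \<or> 2 \<le> j"
proof -
  from assms show "i < n" "j < n" "k < n" by auto
  from assms have "distinct [h, i, j, k] \<and> (2 \<le> h \<or> 2 \<le> j)"
    by (cases rule: cyclic_window_cases) (use assms(1) in auto)
  then show "distinct [h, i, j, k]" "2 \<le> h \<or> 2 \<le> j" by simp_all
qed

lemma interleaved_window:
  assumes f: "ccw_parab n f" and n: "4 \<le> n" and h: "h < n"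
    and hijk: "Suc h mod n = i" "Suc i mod n = j" "Suc j mod n = k"
  shows "interleaved (f h) (f i) (f j) (f k)"
proof -
  have f0_least: "f 0 < f k" if "1 \<le> k" "k < n" for k
    using f that unfolding ccw_parab_def by auto
  have f_decreasing: "f k < f j" if "1 \<le> j" "j < k" "k < n" for j k
    using f that unfolding ccw_parab_def by auto
  from n h hijk show ?thesis
  proof (cases rule: cyclic_window_cases)
    case 1
    moreover have "f 2 < f 1" "f (n - 1) < f 2" "f 0 < f (n - 1)"
      using n f_decreasing[of 1 2] f_decreasing[of 2 "n - 1"] f0_least[of "n - 1"] by simp_all
    ultimately show ?thesis by (intro interleavedI) simp
  next
    case 2
    moreover have "f (n - 2) < f 1" "f (n - 1) < f (n - 2)" "f 0 < f (n - 1)"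
      using n f_decreasing[of 1 "n - 2"] f_decreasing[of "n - 2" "n - 1"] f0_least[of "n - 1"]
      by simp_all
    ultimately show ?thesis by (intro interleavedI) simp
  next
    case 3
    moreover have "f (n - 2) < f (n - 3)" "f (n - 1) < f (n - 2)" "f 0 < f (n - 1)"
      using n f_decreasing[of "n - 3" "n - 2"] f_decreasing[of "n - 2" "n - 1"] f0_least[of "n - 1"]
      by simp_all
    ultimately show ?thesis by (intro interleavedI) simp
  next
    case 4
    moreover have "f (h + 2) < f (h + 1)" "f (h + 3) < f (h + 2)"
      using 4 f_decreasing[of "h + 1" "h + 2"] f_decreasing[of "h + 2" "h + 3"] by simp_all
    moreover have "f 0 < f 3" if "h = 0" using 4 that f0_least[of 3] by simp
    moreover have "f (h + 1) < f h" if "h \<noteq> 0" using 4 that f_decreasing[of h "h + 1"] by simp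
    ultimately show ?thesis by (cases "h = 0") (simp_all add: interleavedI)
  qed
qed

lemma Bpt_parab:
  assumes f: "ccw_parab n f" and n: "4 \<le> n" and h: "h < n"
    and hijk: "Suc h mod n = i" "Suc i mod n = j" "Suc j mod n = k"
  shows "Bpt n (parab \<circ> f) i = chord_meet (f h) (f i) (f j) (f k)"
proof -
  have "vtx n (parab \<circ> f) (int i + 1) = parab (f j)"
    using vtx_of_nat[of n _ "Suc i"] hijk by (simp add: add.commute)
  moreover have "vtx n (parab \<circ> f) (int i + 2) = parab (f k)"
    using vtx_of_nat[of n _ "Suc (Suc i)"] mod_Suc_eq[of "Suc i" n] hijk by (simp add: add.commute)
  moreover have "vtx n (parab \<circ> f) (int i) = parab (f i)"
    using vtx_of_nat[of n _ i] hijk by auto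
  ultimately show ?thesis
    unfolding Bpt_def using vtx_pred[OF hijk(1) h]
    by (simp add: the_chord_meet[OF interleaved_window[OF assms]])
qed

lemma Bpt_parab_mem:
  assumes "ccw_parab n f" "4 \<le> n" "h < n" "Suc h mod n = i" "Suc i mod n = j" "Suc j mod n = k"
  shows "Bpt n (parab \<circ> f) i \<in> closed_segment (parab (f h)) (parab (f j))"
    and "Bpt n (parab \<circ> f) i \<in> closed_segment (parab (f i)) (parab (f k))"
  unfolding Bpt_parab[OF assms] using chord_meet_mem[OF interleaved_window[OF assms]] by auto

lemma ex_cyclic_pred:
  assumes "i < n"
  obtains h where "h < n" "Suc h mod n = i"
proof (cases "i = 0")
  case True
  with assms show ?thesis by (intro that[of "n - 1"]) auto
next
  case False
  with assms show ?thesis by (intro that[of "i - 1"]) auto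
qed

lemma polygon_region_parab_vertex:
  "k < n \<Longrightarrow> parab (f k) \<in> polygon_region n (parab \<circ> f)"
  unfolding polygon_region_def by (intro hull_inc) auto

lemma inner_region_subset_polygon_region_parab:
  assumes f: "ccw_parab n f" and n: "4 \<le> n"
  shows "inner_region n (parab \<circ> f) \<subseteq> polygon_region n (parab \<circ> f)"
  unfolding inner_region_def
proof (rule hull_minimal)
  show "convex (polygon_region n (parab \<circ> f))"
    by (simp add: polygon_region_def)
  show "Bpt n (parab \<circ> f) ` {..<n} \<subseteq> polygon_region n (parab \<circ> f)"
  proof (rule image_subsetI)
    fix i assume "i \<in> {..<n}"
    then obtain h where h: "h < n" "Suc h mod n = i" by (auto elim: ex_cyclic_pred)
    have "closed_segment (parab (f h)) (parab (f (Suc i mod n))) \<subseteq> polygon_region n (parab \<circ> f)"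
      using h n polygon_region_parab_vertex[of h n f]
        polygon_region_parab_vertex[of "Suc i mod n" n f]
      by (intro closed_segment_subset) (auto simp: polygon_region_def)
    then show "Bpt n (parab \<circ> f) i \<in> polygon_region n (parab \<circ> f)"
      using Bpt_parab_mem(1)[OF f n h refl refl] by blast
  qed
qed

section \<open>Homothetic triangles\<close>

definition tri :: "real \<Rightarrow> real \<Rightarrow> (real \<times> real) set" where
  "tri h s = convex hull {(0, h), (s, h - s), (- s, h - s)}"

lemma tri_eq_affine_image: "tri h s = (\<lambda>p. s *\<^sub>R p + (0, h)) ` tri 0 1"
proof -
  have "(\<lambda>p. s *\<^sub>R p + (0, h)) ` tri 0 1 = (\<lambda>p. (0, h) + s *\<^sub>R p) ` tri 0 1"
    by (simp add: add.commute)
  also have "\<dots> = tri h s"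
    unfolding tri_def convex_hull_affinity[symmetric] by (simp add: algebra_simps)
  finally show ?thesis by simp
qed

lemma area_tri: "area (tri h s) = s\<^sup>2 * area (tri 0 1)"
  unfolding area_def tri_eq_affine_image[of h s] measure_lebesgue_affine
  by (simp add: power2_eq_square)

lemma mem_triI:
  assumes s: "0 < s" and y: "h - s \<le> y" and x: "\<bar>x\<bar> \<le> h - y"
  shows "(x, y) \<in> tri h s"
proof -
  define t where "t = (y - (h - s)) / s"
  define v where "v = ((h - y) + x) / (2 * s)"
  define w where "w = ((h - y) - x) / (2 * s)"
  have "0 \<le> t" "0 \<le> v" "0 \<le> w" "t + v + w = 1"
    using s x y by (auto simp: t_def v_def w_def field_simps abs_le_iff)
  moreover have "(x, y) = t *\<^sub>R (0, h) + v *\<^sub>R (s, h - s) + w *\<^sub>R (- s, h - s)"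
    using s by (simp add: t_def v_def w_def field_simps)
  ultimately show ?thesis unfolding tri_def convex_hull_3 by blast
qed

lemma area_tri_pos: "0 < area (tri 0 1)"
proof -
  have "cbox (- 1 / 4, - 1) (1 / 4, - 1 / 2) \<subseteq> tri 0 1"
    by (auto simp: cbox_Pair_eq intro!: mem_triI)
  then have "measure lebesgue (cbox (- 1 / 4 :: real, - 1 :: real) (1 / 4, - 1 / 2))
      \<le> area (tri 0 1)"
    unfolding area_def tri_def
    by (intro measure_mono_fmeasurable lmeasurable_compact finite_imp_compact_convex_hull) auto
  moreover have "measure lebesgue (cbox (- 1 / 4 :: real, - 1 :: real) (1 / 4, - 1 / 2)) = 1 / 4"
    by (simp add: content_Pair)
  ultimately show ?thesis by simp
qed

lemma area_mono_convex_hull: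
  assumes "finite A" "finite B" "convex hull A \<subseteq> convex hull B"
  shows "area (convex hull A) \<le> area (convex hull B)"
proof -
  have "convex hull A \<in> lmeasurable" "convex hull B \<in> lmeasurable"
    using assms by (simp_all add: lmeasurable_compact finite_imp_compact_convex_hull)
  then show ?thesis
    unfolding area_def using assms(3) by (intro measure_mono_fmeasurable) (auto dest: fmeasurableD)
qed

lemma area_convex_hull_le_tri:
  assumes "finite A" "convex hull A \<subseteq> tri h s"
  shows "area (convex hull A) \<le> s\<^sup>2 * area (tri 0 1)"
proof -
  have "area (convex hull A) \<le> area (tri h s)"
    unfolding tri_def by (rule area_mono_convex_hull) (use assms in \<open>simp_all add: tri_def\<close>)
  then show ?thesis unfolding area_tri[of h s] .
qed

lemma tri_le_area_convex_hull:
  assumes "finite A" "tri h s \<subseteq> convex hull A"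
  shows "s\<^sup>2 * area (tri 0 1) \<le> area (convex hull A)"
proof -
  have "area (tri h s) \<le> area (convex hull A)"
    unfolding tri_def by (rule area_mono_convex_hull) (use assms in \<open>simp_all add: tri_def\<close>)
  then show ?thesis unfolding area_tri[of h s] .
qed

lemma tri_subset_convex:
  assumes S: "convex S" and base: "(- u, v) \<in> S" "(u, v) \<in> S" and top: "(0, w) \<in> S"
    and s: "0 < s" "s \<le> u" "s \<le> w - v"
  shows "tri (v + s) s \<subseteq> S"
  unfolding tri_def
proof (rule hull_minimal)
  show "convex S" by (rule S)
  have u: "0 < u" using s by simp
  have "((u - s) / (2 * u)) *\<^sub>R (- u, v) + ((u + s) / (2 * u)) *\<^sub>R (u, v) \<in> S"
    by (rule convexD[OF S]) (use base s u in \<open>auto simp: field_simps\<close>)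
  moreover have "((u + s) / (2 * u)) *\<^sub>R (- u, v) + ((u - s) / (2 * u)) *\<^sub>R (u, v) \<in> S"
    by (rule convexD[OF S]) (use base s u in \<open>auto simp: field_simps\<close>)
  moreover have "(1 / 2) *\<^sub>R (- u, v) + (1 / 2) *\<^sub>R (u, v) \<in> S"
    by (rule convexD[OF S]) (use base in auto)
  ultimately have sv: "(s, v) \<in> S" "(- s, v) \<in> S" "(0, v) \<in> S"
    using u by (simp_all add: field_simps)
  define t where "t = s / (w - v)"
  have "t * (w - v) = s" "0 \<le> t" "t \<le> 1" using s by (auto simp: t_def field_simps)
  moreover have "(1 - t) *\<^sub>R (0, v) + t *\<^sub>R (0, w) \<in> S"
    using \<open>(0, v) \<in> S\<close> top \<open>0 \<le> t\<close> \<open>t \<le> 1\<close> by (intro convexD[OF S]) auto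
  moreover have "(1 - t) * v + t * w = v + t * (w - v)" by (simp add: algebra_simps)
  ultimately have "(0, v + s) \<in> S" by simp
  with sv show "{(0, v + s), (s, v + s - s), (- s, v + s - s)} \<subseteq> S" by simp
qed

lemma parab_mem_tri:
  assumes \<eta>: "0 < \<eta>" "\<eta> \<le> 1" and x: "\<bar>x\<bar> \<le> \<eta> \<or> 1 - \<eta> \<le> \<bar>x\<bar> \<and> \<bar>x\<bar> \<le> 1"
  shows "parab x \<in> tri \<eta> (1 + \<eta>)"
proof -
  have x1: "\<bar>x\<bar> \<le> 1" using x \<eta> by auto
  have sq: "x\<^sup>2 = \<bar>x\<bar> * \<bar>x\<bar>" by (simp add: power2_eq_square)
  have "\<bar>x\<bar> * \<bar>x\<bar> \<le> 1 * 1" using x1 by (intro mult_mono) auto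
  moreover have "\<bar>x\<bar> - \<bar>x\<bar> * \<bar>x\<bar> \<le> \<eta>"
  proof (cases "\<bar>x\<bar> \<le> \<eta>")
    case False
    then have "(1 - \<bar>x\<bar>) * \<bar>x\<bar> \<le> (1 - \<bar>x\<bar>) * 1" using x by (intro mult_left_mono) auto
    then show ?thesis using False x by (simp add: algebra_simps)
  qed (use zero_le_square[of "\<bar>x\<bar>"] in linarith)
  ultimately show ?thesis
    unfolding parab_def sq using \<eta> by (intro mem_triI) auto
qed

section \<open>A polygon with a small inner polygon\<close>

definition small_ratio_xs :: "nat \<Rightarrow> real \<Rightarrow> nat \<Rightarrow> real" where
  "small_ratio_xs n \<delta> k =
     (if k = 0 then - 1 else if k = 1 then 1 else \<delta> * (real n + 1 - 2 * real k) / (real n - 3))"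

lemma small_ratio_xs_simps:
  assumes "4 \<le> n"
  shows "small_ratio_xs n \<delta> 0 = - 1" "small_ratio_xs n \<delta> 1 = 1"
    "small_ratio_xs n \<delta> 2 = \<delta>" "small_ratio_xs n \<delta> (n - 1) = - \<delta>"
  using assms by (auto simp: small_ratio_xs_def of_nat_diff field_simps)

lemma abs_small_ratio_xs_le:
  assumes "4 \<le> n" "0 \<le> \<delta>" "2 \<le> k" "k < n"
  shows "\<bar>small_ratio_xs n \<delta> k\<bar> \<le> \<delta>"
proof -
  define q where "q = (real n + 1 - 2 * real k) / (real n - 3)"
  have "\<bar>real n + 1 - 2 * real k\<bar> \<le> real n - 3" using assms by auto
  then have "\<bar>q\<bar> \<le> 1" using assms by (simp add: q_def abs_divide)
  then have "\<delta> * \<bar>q\<bar> \<le> \<delta>" using assms(2) by (rule mult_left_le)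
  moreover have "small_ratio_xs n \<delta> k = \<delta> * q" using assms by (simp add: small_ratio_xs_def q_def)
  ultimately show ?thesis using assms(2) by (simp add: abs_mult)
qed

lemma ccw_parab_small_ratio_xs:
  assumes n: "4 \<le> n" and \<delta>: "0 < \<delta>" "\<delta> < 1"
  shows "ccw_parab n (small_ratio_xs n \<delta>)"
  unfolding ccw_parab_def
proof (intro conjI allI impI)
  let ?f = "small_ratio_xs n \<delta>"
  have small: "\<bar>?f k\<bar> \<le> \<delta>" if "2 \<le> k" "k < n" for k
    using abs_small_ratio_xs_le[OF n _ that] \<delta> by simp
  fix k assume k: "1 \<le> k \<and> k < n"
  show "?f 0 < ?f k"
  proof (cases "k = 1")
    case True
    then show ?thesis by (simp add: small_ratio_xs_def)
  next
    case False
    then show ?thesis using small[of k] k \<delta> n by (auto simp: small_ratio_xs_simps abs_le_iff)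
  qed
next
  let ?f = "small_ratio_xs n \<delta>"
  fix j k assume jk: "1 \<le> j \<and> j < k \<and> k < n"
  show "?f k < ?f j"
  proof (cases "j = 1")
    case True
    then have "?f j = 1" by (simp add: small_ratio_xs_def)
    then show ?thesis
      using abs_small_ratio_xs_le[OF n _ _, of \<delta> k] jk \<delta> True by (auto simp: abs_le_iff)
  next
    case False
    then have "\<delta> * (real n + 1 - 2 * real k) < \<delta> * (real n + 1 - 2 * real j)"
      using jk \<delta> by (intro mult_strict_left_mono) auto
    then show ?thesis
      using False jk n by (simp add: small_ratio_xs_def divide_strict_right_mono)
  qed
qed

lemma abs_small_ratio_xs_le_1:
  assumes "4 \<le> n" "0 \<le> \<delta>" "\<delta> \<le> 1" "l < n"
  shows "\<bar>small_ratio_xs n \<delta> l\<bar> \<le> 1"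
  using abs_small_ratio_xs_le[of n \<delta> l] small_ratio_xs_simps[of n \<delta>] assms
  by (cases "l \<le> 1") (auto simp: le_Suc_eq)

lemma small_ratio_xs_window_bound:
  assumes n: "4 \<le> n" and \<delta>: "0 < \<delta>" "\<delta> < 1" and h: "h < n"
    and hijk: "Suc h mod n = i" "Suc i mod n = j" "Suc j mod n = k"
    and x: "x \<in> closed_segment (small_ratio_xs n \<delta> h) (small_ratio_xs n \<delta> j)"
      "x \<in> closed_segment (small_ratio_xs n \<delta> i) (small_ratio_xs n \<delta> k)"
  shows "\<bar>x\<bar> \<le> \<delta>" and "\<bar>small_ratio_xs n \<delta> h * small_ratio_xs n \<delta> j\<bar> \<le> \<delta>"
proof -
  let ?f = "small_ratio_xs n \<delta>"
  note window = cyclic_window_distinct[OF n h hijk]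
  have small: "\<bar>?f l\<bar> \<le> \<delta>" if "2 \<le> l" "l < n" for l
    using abs_small_ratio_xs_le[OF n _ that] \<delta> by simp
  have le: "?f l \<le> \<delta>" if "l < n" "l \<noteq> 1" for l
    using small[of l] small_ratio_xs_simps[OF n, of \<delta>] that \<delta> by (cases "l = 0") auto
  have ge: "- \<delta> \<le> ?f l" if "l < n" "l \<noteq> 0" for l
    using small[of l] small_ratio_xs_simps[OF n, of \<delta>] that \<delta> by (cases "l = 1") auto
  have "max (?f h) (?f j) \<le> \<delta> \<or> max (?f i) (?f k) \<le> \<delta>"
    using le h window by (cases "h = 1 \<or> j = 1") auto
  moreover have "- \<delta> \<le> min (?f h) (?f j) \<or> - \<delta> \<le> min (?f i) (?f k)"
    using ge h window by (cases "h = 0 \<or> j = 0") auto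
  ultimately show "\<bar>x\<bar> \<le> \<delta>"
    using x by (auto simp: mem_closed_segment_real_min_max_iff abs_le_iff)
  have one: "\<bar>?f l\<bar> \<le> 1" if "l < n" for l
    using abs_small_ratio_xs_le_1[OF n _ _ that] \<delta> by simp
  have "\<bar>?f h\<bar> * \<bar>?f j\<bar> \<le> \<delta>"
  proof (cases "2 \<le> h")
    case True
    then have "\<bar>?f h\<bar> * \<bar>?f j\<bar> \<le> \<delta> * 1"
      using small[of h] one[of j] h window \<delta> by (intro mult_mono) auto
    then show ?thesis by simp
  next
    case False
    then have "\<bar>?f h\<bar> * \<bar>?f j\<bar> \<le> 1 * \<delta>"
      using small[of j] one[of h] h window \<delta> by (intro mult_mono) auto
    then show ?thesis by simp
  qed
  then show "\<bar>?f h * ?f j\<bar> \<le> \<delta>" by (simp add: abs_mult)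
qed

lemma inner_region_small_ratio_xs_subset_tri:
  assumes n: "4 \<le> n" and \<delta>: "0 < \<delta>" "\<delta> < 1"
  shows "inner_region n (parab \<circ> small_ratio_xs n \<delta>) \<subseteq> tri (4 * \<delta>) (8 * \<delta>)"
  unfolding inner_region_def
proof (intro hull_minimal image_subsetI)
  let ?f = "small_ratio_xs n \<delta>"
  fix i assume "i \<in> {..<n}"
  then obtain h where h: "h < n" "Suc h mod n = i" by (auto elim: ex_cyclic_pred)
  define j k where "j = Suc i mod n" and "k = Suc j mod n"
  define p where "p = Bpt n (parab \<circ> ?f) i"
  have f: "ccw_parab n ?f" using n \<delta> by (auto intro: ccw_parab_small_ratio_xs)
  note mem = Bpt_parab_mem[OF f n h j_def[symmetric] k_def[symmetric], folded p_def]
  then have "fst p \<in> closed_segment (?f h) (?f j)" "fst p \<in> closed_segment (?f i) (?f k)"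
    by (simp_all add: mem_closed_segment_parab)
  note x = small_ratio_xs_window_bound[OF n \<delta> h j_def[symmetric] k_def[symmetric] this]
  have "\<bar>snd p\<bar> \<le> 3 * \<delta>"
    using snd_chord_bound[OF mem(1) _ _ x] abs_small_ratio_xs_le_1[OF n] h j_def n \<delta> by simp
  then show "Bpt n (parab \<circ> ?f) i \<in> tri (4 * \<delta>) (8 * \<delta>)"
    using x \<delta> unfolding p_def[symmetric] by (cases p) (auto intro!: mem_triI simp: abs_le_iff)
qed (simp add: tri_def)

lemma tri_subset_polygon_region_small_ratio_xs:
  assumes n: "4 \<le> n" and \<delta>: "0 < \<delta>" "\<delta> \<le> 1 / 2"
  shows "tri (- \<delta>\<^sup>2) (1 - \<delta>\<^sup>2) \<subseteq> polygon_region n (parab \<circ> small_ratio_xs n \<delta>)"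
proof -
  let ?f = "small_ratio_xs n \<delta>"
  let ?K = "polygon_region n (parab \<circ> ?f)"
  have vals: "?f 0 = - 1" "?f 1 = 1" "?f 2 = \<delta>" "?f (n - 1) = - \<delta>"
    using small_ratio_xs_simps n by auto
  have "\<delta> * \<delta> \<le> 1 / 2 * 1" using \<delta> by (intro mult_mono) auto
  then have "\<delta>\<^sup>2 < 1" by (simp add: power2_eq_square)
  have "(1 / 2) *\<^sub>R parab (?f 2) + (1 / 2) *\<^sub>R parab (?f (n - 1)) \<in> ?K"
    using n by (intro convexD polygon_region_parab_vertex) (auto simp: polygon_region_def)
  then have "tri (- 1 + (1 - \<delta>\<^sup>2)) (1 - \<delta>\<^sup>2) \<subseteq> ?K"
    using polygon_region_parab_vertex[of 0 n ?f] polygon_region_parab_vertex[of 1 n ?f] n vals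
      \<open>\<delta>\<^sup>2 < 1\<close>
    by (intro tri_subset_convex[of _ 1 "- 1" "- \<delta>\<^sup>2"]) (auto simp: parab_def polygon_region_def)
  then show ?thesis by simp
qed

lemma exists_small_inner_ratio:
  assumes n: "4 \<le> n" and \<epsilon>: "0 < \<epsilon>"
  shows "\<exists>A. convex_ngon n A \<and> area (inner_region n A) / area (polygon_region n A) < \<epsilon>"
proof -
  define \<delta> where "\<delta> = min (1 / 2) (\<epsilon> / 128)"
  have \<delta>: "0 < \<delta>" "\<delta> \<le> 1 / 2" "\<delta> \<le> \<epsilon> / 128" using \<epsilon> by (auto simp: \<delta>_def)
  define f where "f = small_ratio_xs n \<delta>"
  have conv: "convex_ngon n (parab \<circ> f)"
    using n \<delta> by (auto simp: f_def intro!: convex_ngon_parab ccw_parab_small_ratio_xs)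
  define m where "m = area (tri 0 1)"
  have m: "0 < m" using area_tri_pos by (simp add: m_def)
  have inner: "area (inner_region n (parab \<circ> f)) \<le> (8 * \<delta>)\<^sup>2 * m"
    using inner_region_small_ratio_xs_subset_tri[OF _ \<delta>(1), of n] n \<delta>(2)
    unfolding m_def f_def inner_region_def
    by (intro area_convex_hull_le_tri[of _ "4 * \<delta>"]) auto
  have outer: "(1 - \<delta>\<^sup>2)\<^sup>2 * m \<le> area (polygon_region n (parab \<circ> f))"
    using tri_subset_polygon_region_small_ratio_xs[OF _ \<delta>(1,2), of n] n
    unfolding m_def f_def polygon_region_def by (intro tri_le_area_convex_hull[of _ "- \<delta>\<^sup>2"]) auto
  have "\<delta>\<^sup>2 \<le> 1 / 4" using \<delta> mult_mono[of \<delta> "1 / 2" \<delta> "1 / 2"] by (simp add: power2_eq_square)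
  then have "(3 / 4)\<^sup>2 \<le> (1 - \<delta>\<^sup>2)\<^sup>2" by (intro power_mono) auto
  then have "1 / 2 * m \<le> (1 - \<delta>\<^sup>2)\<^sup>2 * m"
    using m by (intro mult_right_mono) (auto simp: power2_eq_square)
  then have "m / 2 \<le> area (polygon_region n (parab \<circ> f))" using outer by simp
  then have "area (inner_region n (parab \<circ> f)) / area (polygon_region n (parab \<circ> f))
      \<le> (8 * \<delta>)\<^sup>2 * m / (m / 2)"
    using inner m by (intro frac_le) auto
  also have "\<dots> = 128 * \<delta> * \<delta>" using m by (simp add: power2_eq_square)
  also have "\<dots> \<le> 64 * \<delta>" using \<delta> by (simp add: mult_left_le)
  also have "\<dots> < \<epsilon>" using \<delta> \<epsilon> by simp
  finally show ?thesis using conv by blast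
qed

section \<open>A polygon with a large inner polygon\<close>

definition large_ratio_xs :: "nat \<Rightarrow> real \<Rightarrow> nat \<Rightarrow> real" where
  "large_ratio_xs n \<eta> k =
     (if k = 0 then - 1 else if k = 1 then 1 else if k = 2 then 1 - \<eta> else if k = n - 1 then \<eta> - 1
      else \<eta> * (real n + 1 - 2 * real k) / (real n - 5))"

lemma large_ratio_xs_simps:
  assumes "6 \<le> n"
  shows "large_ratio_xs n \<eta> 0 = - 1" "large_ratio_xs n \<eta> 1 = 1" "large_ratio_xs n \<eta> 2 = 1 - \<eta>"
    "large_ratio_xs n \<eta> (n - 1) = \<eta> - 1" "large_ratio_xs n \<eta> 3 = \<eta>"
    "large_ratio_xs n \<eta> (n - 2) = - \<eta>"
  using assms by (auto simp: large_ratio_xs_def of_nat_diff field_simps)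

lemma large_ratio_xs_middle:
  assumes "3 \<le> k" "k + 2 \<le> n"
  shows "large_ratio_xs n \<eta> k = \<eta> * (real n + 1 - 2 * real k) / (real n - 5)"
  using assms by (auto simp: large_ratio_xs_def)

lemma abs_large_ratio_xs_le:
  assumes "6 \<le> n" "0 \<le> \<eta>" "3 \<le> k" "k + 2 \<le> n"
  shows "\<bar>large_ratio_xs n \<eta> k\<bar> \<le> \<eta>"
proof -
  define q where "q = (real n + 1 - 2 * real k) / (real n - 5)"
  have "\<bar>real n + 1 - 2 * real k\<bar> \<le> real n - 5" using assms by auto
  then have "\<bar>q\<bar> \<le> 1" using assms by (simp add: q_def abs_divide)
  then have "\<eta> * \<bar>q\<bar> \<le> \<eta>" using assms(2) by (rule mult_left_le)
  moreover have "large_ratio_xs n \<eta> k = \<eta> * q"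
    using assms by (simp add: large_ratio_xs_middle q_def)
  ultimately show ?thesis using assms(2) by (simp add: abs_mult)
qed

lemma large_ratio_xs_mirror:
  assumes "6 \<le> n" "2 \<le> k" "k \<le> n - 1"
  shows "large_ratio_xs n \<eta> (n + 1 - k) = - large_ratio_xs n \<eta> k"
proof -
  consider "k = 2" | "k = n - 1" | "3 \<le> k" "k + 2 \<le> n" using assms by linarith
  then show ?thesis
  proof cases
    case 3
    then have "3 \<le> n + 1 - k" "n + 1 - k + 2 \<le> n" "real (n + 1 - k) = real n + 1 - real k"
      "real n - 5 \<noteq> 0"
      using assms by (auto simp: of_nat_diff)
    with 3 show ?thesis by (simp add: large_ratio_xs_middle field_simps)
  qed (use assms large_ratio_xs_simps[OF assms(1), of \<eta>] in auto)
qed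

lemma ccw_parab_large_ratio_xs:
  assumes n: "6 \<le> n" and \<eta>: "0 < \<eta>" "\<eta> < 1 / 2"
  shows "ccw_parab n (large_ratio_xs n \<eta>)"
proof -
  let ?f = "large_ratio_xs n \<eta>"
  have step: "?f (Suc k) < ?f k" if "1 \<le> k" "Suc k < n" for k
  proof -
    have "k = 1 \<or> k = 2 \<or> 3 \<le> k \<and> k + 3 \<le> n \<or> k + 2 = n" using that by linarith
    then consider "k = 1" | "k = 2" | "3 \<le> k" "k + 3 \<le> n" | "k + 2 = n" by blast
    then show ?thesis
    proof cases
      case 3
      then have "\<eta> * (real n + 1 - 2 * real (Suc k)) < \<eta> * (real n + 1 - 2 * real k)"
        using \<eta> by (intro mult_strict_left_mono) auto
      then show ?thesis using 3 n by (simp add: large_ratio_xs_middle divide_strict_right_mono)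
    next
      case 4
      then have "k = n - 2" "Suc k = n - 1" by simp_all
      then show ?thesis using n \<eta> large_ratio_xs_simps[OF n] by simp
    qed (use n \<eta> large_ratio_xs_simps[OF n] in \<open>auto simp: numeral_eq_Suc\<close>)
  qed
  have dec: "?f k < ?f j" if "1 \<le> j" "j < k" "k < n" for j k
    using that
  proof (induction k)
    case (Suc k)
    then show ?case using step[of k] by (cases "j = k") auto
  qed simp
  show ?thesis
    unfolding ccw_parab_def
  proof (intro conjI allI impI)
    fix k assume k: "1 \<le> k \<and> k < n"
    have "?f (n - 1) \<le> ?f k"
    proof (cases "k = n - 1")
      case False
      then have "k < n - 1" using k by linarith
      then show ?thesis using dec[of k "n - 1"] k by simp
    qed simp
    then show "?f 0 < ?f k" using n \<eta> large_ratio_xs_simps[OF n] by simp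
  qed (use dec in auto)
qed

lemma Bpt_large_ratio_xs_corners:
  assumes n: "6 \<le> n" and \<eta>: "0 < \<eta>" "\<eta> < 1 / 2"
  shows "Bpt n (parab \<circ> large_ratio_xs n \<eta>) 1 = (1 / (1 + 2 * \<eta>), \<eta> / (1 + 2 * \<eta>) - 1 + \<eta>)"
    and "Bpt n (parab \<circ> large_ratio_xs n \<eta>) (n - 1) = (- 1 / (1 + 2 * \<eta>), \<eta> / (1 + 2 * \<eta>) - 1 + \<eta>)"
proof -
  let ?f = "large_ratio_xs n \<eta>"
  have f: "ccw_parab n ?f" "4 \<le> n" using n \<eta> by (auto intro: ccw_parab_large_ratio_xs)
  note vals = large_ratio_xs_simps[OF n, of \<eta>]
  have abcd: "interleaved (- 1) 1 (1 - \<eta>) \<eta>" using \<eta> by (intro interleavedI) simp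
  have meet: "chord_meet (- 1) 1 (1 - \<eta>) \<eta> = (1 / (1 + 2 * \<eta>), \<eta> / (1 + 2 * \<eta>) - 1 + \<eta>)"
    by (simp add: chord_meet_def Let_def algebra_simps add_divide_distrib)
  have "Bpt n (parab \<circ> ?f) 1 = chord_meet (?f 0) (?f 1) (?f 2) (?f 3)"
    using n by (intro Bpt_parab f) auto
  then show "Bpt n (parab \<circ> ?f) 1 = (1 / (1 + 2 * \<eta>), \<eta> / (1 + 2 * \<eta>) - 1 + \<eta>)"
    using vals meet by simp
  have "Bpt n (parab \<circ> ?f) (n - 1) = chord_meet (?f (n - 2)) (?f (n - 1)) (?f 0) (?f 1)"
    using n by (intro Bpt_parab f) (auto simp: Suc_diff_Suc numeral_eq_Suc)
  also have "\<dots> = chord_meet (- \<eta>) (- (1 - \<eta>)) (- 1) (- (- 1))" using vals by simp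
  also have "\<dots> = (- 1 / (1 + 2 * \<eta>), \<eta> / (1 + 2 * \<eta>) - 1 + \<eta>)"
    unfolding chord_meet_mirror[OF abcd] meet by simp
  finally show "Bpt n (parab \<circ> ?f) (n - 1) = (- 1 / (1 + 2 * \<eta>), \<eta> / (1 + 2 * \<eta>) - 1 + \<eta>)" .
qed

lemma Bpt_large_ratio_xs_apex:
  assumes n: "6 \<le> n" and \<eta>: "0 < \<eta>" "\<eta> < 1 / 2"
  obtains w where "- 3 * \<eta> \<le> w" "(0, w) \<in> inner_region n (parab \<circ> large_ratio_xs n \<eta>)"
proof -
  let ?f = "large_ratio_xs n \<eta>"
  let ?K1 = "inner_region n (parab \<circ> ?f)"
  have f: "ccw_parab n ?f" "4 \<le> n" using n \<eta> by (auto intro: ccw_parab_large_ratio_xs)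
  note vals = large_ratio_xs_simps[OF n, of \<eta>]
  have window: "Suc 2 mod n = 3" "Suc 3 mod n = 4" "Suc 4 mod n = 5" using n by simp_all
  define p where "p = Bpt n (parab \<circ> ?f) 3"
  have abcd: "interleaved (?f 2) (?f 3) (?f 4) (?f 5)"
    using interleaved_window[OF f _ window] n by simp
  have p: "p = chord_meet (?f 2) (?f 3) (?f 4) (?f 5)"
    unfolding p_def using Bpt_parab[OF f _ window] n by simp
  have "Bpt n (parab \<circ> ?f) (n - 3) = chord_meet (?f (n - 4)) (?f (n - 3)) (?f (n - 2)) (?f (n - 1))"
    using n by (intro Bpt_parab f) (auto simp: Suc_diff_Suc numeral_eq_Suc)
  also have "\<dots> = chord_meet (- ?f 5) (- ?f 4) (- ?f 3) (- ?f 2)"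
    using large_ratio_xs_mirror[OF n, of 5 \<eta>] large_ratio_xs_mirror[OF n, of 4 \<eta>]
      large_ratio_xs_mirror[OF n, of 3 \<eta>] large_ratio_xs_mirror[OF n, of 2 \<eta>] n
    by (simp add: numeral_eq_Suc)
  also have "\<dots> = (- fst p, snd p)" unfolding p by (rule chord_meet_mirror[OF abcd])
  finally have p': "Bpt n (parab \<circ> ?f) (n - 3) = (- fst p, snd p)" .
  have "p \<in> ?K1" "(- fst p, snd p) \<in> ?K1"
    unfolding p'[symmetric] unfolding inner_region_def p_def using n by (auto intro: hull_inc)
  then have "(1 / 2) *\<^sub>R p + (1 / 2) *\<^sub>R (- fst p, snd p) \<in> ?K1"
    unfolding inner_region_def by (intro convexD convex_convex_hull) auto
  then have apex: "(0, snd p) \<in> ?K1" by (cases p) (simp add: scaleR_prod_def)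
  have seg: "p \<in> closed_segment (parab (?f 2)) (parab (?f 4))"
    "p \<in> closed_segment (parab (?f 3)) (parab (?f 5))"
    unfolding p using chord_meet_mem[OF abcd] by auto
  have f4: "\<bar>?f 4\<bar> \<le> \<eta>" using n \<eta> by (intro abs_large_ratio_xs_le) auto
  have "?f 5 < ?f 3" using f n unfolding ccw_parab_def by auto
  then have "\<bar>fst p\<bar> \<le> \<eta>"
    using seg f4 vals \<eta>
    by (auto simp: mem_closed_segment_parab mem_closed_segment_real_min_max_iff abs_le_iff)
  moreover have "\<bar>?f 2 * ?f 4\<bar> \<le> 1 * \<eta>"
    unfolding abs_mult using vals f4 \<eta> by (intro mult_mono) auto
  ultimately have "\<bar>snd p\<bar> \<le> 3 * \<eta>"
    using vals f4 \<eta> by (intro snd_chord_bound[OF seg(1)]) auto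
  with apex show ?thesis by (intro that[of "snd p"]) auto
qed

lemma polygon_region_large_ratio_xs_subset_tri:
  assumes n: "6 \<le> n" and \<eta>: "0 < \<eta>" "\<eta> < 1 / 2"
  shows "polygon_region n (parab \<circ> large_ratio_xs n \<eta>) \<subseteq> tri \<eta> (1 + \<eta>)"
  unfolding polygon_region_def
proof (intro hull_minimal image_subsetI)
  fix k assume "k \<in> {..<n}"
  then consider "k = 0" | "k = 1" | "k = 2" | "k = n - 1" | "3 \<le> k" "k + 2 \<le> n" by fastforce
  then have "\<bar>large_ratio_xs n \<eta> k\<bar> \<le> \<eta> \<or>
      1 - \<eta> \<le> \<bar>large_ratio_xs n \<eta> k\<bar> \<and> \<bar>large_ratio_xs n \<eta> k\<bar> \<le> 1"
  proof cases
    case 5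
    then show ?thesis using abs_large_ratio_xs_le[OF n] \<eta> by simp
  qed (use large_ratio_xs_simps[OF n, of \<eta>] \<eta> in auto)
  then show "(parab \<circ> large_ratio_xs n \<eta>) k \<in> tri \<eta> (1 + \<eta>)"
    using \<eta> by (simp add: parab_mem_tri)
qed (simp add: tri_def)

lemma tri_subset_inner_region_large_ratio_xs:
  assumes n: "6 \<le> n" and \<eta>: "0 < \<eta>" "\<eta> \<le> 1 / 20"
  obtains t s where "1 - 5 * \<eta> \<le> s" "tri t s \<subseteq> inner_region n (parab \<circ> large_ratio_xs n \<eta>)"
proof -
  let ?f = "large_ratio_xs n \<eta>"
  let ?K1 = "inner_region n (parab \<circ> ?f)"
  define u v where "u = 1 / (1 + 2 * \<eta>)" and "v = \<eta> / (1 + 2 * \<eta>) - 1 + \<eta>"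
  have "Bpt n (parab \<circ> ?f) 1 \<in> ?K1" "Bpt n (parab \<circ> ?f) (n - 1) \<in> ?K1"
    using n by (auto simp: inner_region_def intro!: hull_inc)
  then have corners: "(u, v) \<in> ?K1" "(- u, v) \<in> ?K1"
    using Bpt_large_ratio_xs_corners[OF n, of \<eta>] \<eta> by (simp_all add: u_def v_def)
  obtain w where w: "- 3 * \<eta> \<le> w" "(0, w) \<in> ?K1"
    using Bpt_large_ratio_xs_apex[OF n, of \<eta>] \<eta> by auto
  have "1 - 2 * \<eta> \<le> u" "v \<le> - 1 + 2 * \<eta>"
    using \<eta> by (auto simp: u_def v_def field_simps)
  then have "1 - 5 * \<eta> \<le> min u (w - v)" using w \<eta> by simp
  moreover have "tri (v + min u (w - v)) (min u (w - v)) \<subseteq> ?K1"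
    using corners w \<open>1 - 5 * \<eta> \<le> min u (w - v)\<close> \<eta>
    by (intro tri_subset_convex) (auto simp: inner_region_def)
  ultimately show ?thesis by (rule that)
qed

lemma large_ratio_bound:
  fixes \<epsilon> \<eta> s :: real
  assumes \<eta>: "0 < \<eta>" "\<eta> \<le> 1 / 20" "20 * \<eta> \<le> \<epsilon>" and s: "1 - 5 * \<eta> \<le> s"
  shows "1 - \<epsilon> < s\<^sup>2 / (1 + \<eta>)\<^sup>2"
proof -
  have "(1 - 5 * \<eta>)\<^sup>2 \<le> s\<^sup>2" using s \<eta> by (intro power_mono) auto
  moreover have "1 - 10 * \<eta> \<le> (1 - 5 * \<eta>)\<^sup>2" by (simp add: power2_eq_square algebra_simps)
  moreover have "(1 - \<epsilon>) * (1 + \<eta>)\<^sup>2 < 1 - 10 * \<eta>"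
  proof (cases "\<epsilon> \<le> 1")
    case True
    have "(1 + \<eta>)\<^sup>2 \<le> 1 + 3 * \<eta>" using \<eta> by (simp add: power2_eq_square algebra_simps)
    then have "(1 - \<epsilon>) * (1 + \<eta>)\<^sup>2 \<le> (1 - \<epsilon>) * (1 + 3 * \<eta>)"
      using True by (intro mult_left_mono) auto
    also have "\<dots> = 1 + 3 * \<eta> - \<epsilon> - 3 * (\<epsilon> * \<eta>)" by (simp add: algebra_simps)
    also have "\<dots> < 1 - 10 * \<eta>"
    proof -
      have "0 < \<epsilon> * \<eta>" using \<eta> by simp
      then show ?thesis using \<eta> by linarith
    qed
    finally show ?thesis .
  next
    case False
    then have "(1 - \<epsilon>) * (1 + \<eta>)\<^sup>2 \<le> 0" by (intro mult_nonpos_nonneg) auto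
    then show ?thesis using \<eta> by simp
  qed
  ultimately show ?thesis using \<eta> by (simp add: less_divide_eq)
qed

lemma exists_large_inner_ratio:
  assumes n: "6 \<le> n" and \<epsilon>: "0 < \<epsilon>"
  shows "\<exists>A. convex_ngon n A \<and> area (inner_region n A) / area (polygon_region n A) > 1 - \<epsilon>"
proof -
  define \<eta> where "\<eta> = min (1 / 20) (\<epsilon> / 20)"
  have \<eta>: "0 < \<eta>" "\<eta> \<le> 1 / 20" "20 * \<eta> \<le> \<epsilon>" using \<epsilon> by (auto simp: \<eta>_def)
  define f where "f = large_ratio_xs n \<eta>"
  have f: "ccw_parab n f" using n \<eta> by (auto simp: f_def intro: ccw_parab_large_ratio_xs)
  define K K1 where "K = polygon_region n (parab \<circ> f)" and "K1 = inner_region n (parab \<circ> f)"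
  define m where "m = area (tri 0 1)"
  have m: "0 < m" using area_tri_pos by (simp add: m_def)
  obtain t s where s: "1 - 5 * \<eta> \<le> s" "tri t s \<subseteq> K1"
    using tri_subset_inner_region_large_ratio_xs[OF n \<eta>(1,2)] unfolding K1_def f_def by blast
  then have inner: "s\<^sup>2 * m \<le> area K1"
    unfolding m_def K1_def inner_region_def by (intro tri_le_area_convex_hull[of _ t]) auto
  have outer: "area K \<le> (1 + \<eta>)\<^sup>2 * m"
    using polygon_region_large_ratio_xs_subset_tri[OF n, of \<eta>] \<eta>
    unfolding m_def K_def f_def polygon_region_def by (intro area_convex_hull_le_tri[of _ \<eta>]) auto
  have "area K1 \<le> area K"
    using inner_region_subset_polygon_region_parab[OF f] n
    unfolding K_def K1_def inner_region_def polygon_region_def by (intro area_mono_convex_hull) auto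
  have "0 < s\<^sup>2 * m" using s \<eta> m by simp
  then have "s\<^sup>2 * m / ((1 + \<eta>)\<^sup>2 * m) \<le> area K1 / area K"
    using inner outer \<open>area K1 \<le> area K\<close> by (intro frac_le) auto
  then have "s\<^sup>2 / (1 + \<eta>)\<^sup>2 \<le> area K1 / area K" using m by simp
  with large_ratio_bound[OF \<eta> s(1)] show ?thesis
    using convex_ngon_parab[OF f] n unfolding K_def K1_def by auto
qed

theorem theorem1p1:
  shows "(\<forall>n::nat. n \<ge> 5 \<longrightarrow> (\<forall>\<epsilon>::real. \<epsilon> > 0 \<longrightarrow>
            (\<exists>A. convex_ngon n A \<and>
                 area (inner_region n A) / area (polygon_region n A) < \<epsilon>)))
       \<and> (\<forall>n::nat. n \<ge> 6 \<longrightarrow> (\<forall>\<epsilon>::real. \<epsilon> > 0 \<longrightarrow>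
            (\<exists>A. convex_ngon n A \<and>
                 area (inner_region n A) / area (polygon_region n A) > 1 - \<epsilon>)))"
  by (auto intro: exists_small_inner_ratio exists_large_inner_ratio)

end
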